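(* Let $G=(V,E)$ be a finite simple graph with $V=\{1,\dots,n\}$ and real vertex weights $w_1,\dots,w_n$, and let $d\ge 1$. Suppose $\psi, v_1,\dots,v_n\in\mathbb{C}^d$ are complex unit vectors with $\langle v_i|v_j\rangle=0$ whenever $\{i,j\}\in E$, forming a Lovász-optimum orthogonal representation, i.e. $\sum_{j\in V} w_j|\langle\psi|v_j\rangle|^2=\vartheta_c(G)$. Then there exist real unit vectors $\phi,\omega_1,\dots,\omega_n\in\mathbb{R}^{2d-1}$ with $\langle \omega_i|\omega_j\rangle=0$ whenever $\{i,j\}\in E$ and $$\sum_{j\in V} w_j\,\langle \phi|\omega_j\rangle^2=\sum_{j\in V} w_j\,|\langle \psi|v_j\rangle|^2 = \vartheta_c(G);$$ that is, a Lovász-optimum orthogonal representation can be realized in the $(2d-1)$-dimensional real Hilbert space.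
   Context: For the weighted graph $G$, $\vartheta_c(G)=\sup \sum_{j\in V} w_j\,|\langle \psi|v_j\rangle|^2$, where the supremum runs over all dimensions $m\ge1$ and all complex unit vectors $\psi,v_1,\dots,v_n\in\mathbb{C}^m$ such that $\langle v_i|v_j\rangle=0$ whenever $\{i,j\}\in E$. A Lovász-optimum orthogonal representation (LOOR) is a choice of unit vectors $\psi, v_1,\dots,v_n$ (real or complex) satisfying these orthogonality constraints and attaining this supremum. *)

theory Defs
  imports Complex_Main
begin

text \<open>Vectors in C^m (resp. R^m) are represented as functions nat => complex
  (resp. nat => real) vanishing at all indices k >= m.\<close>

definition cvecs :: "nat \<Rightarrow> (nat \<Rightarrow> complex) set" where
  "cvecs m = {v. \<forall>k\<ge>m. v k = 0}"

definition rvecs :: "nat \<Rightarrow> (nat \<Rightarrow> real) set" where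
  "rvecs m = {v. \<forall>k\<ge>m. v k = 0}"

definition cinner :: "nat \<Rightarrow> (nat \<Rightarrow> complex) \<Rightarrow> (nat \<Rightarrow> complex) \<Rightarrow> complex" where
  "cinner m a b = (\<Sum>k<m. cnj (a k) * b k)"

definition rinner :: "nat \<Rightarrow> (nat \<Rightarrow> real) \<Rightarrow> (nat \<Rightarrow> real) \<Rightarrow> real" where
  "rinner m a b = (\<Sum>k<m. a k * b k)"

definition simple_graph :: "nat \<Rightarrow> (nat \<Rightarrow> nat \<Rightarrow> bool) \<Rightarrow> bool" where
  "simple_graph n E \<longleftrightarrow> (\<forall>i j. E i j \<longrightarrow> i < n \<and> j < n \<and> E j i \<and> i \<noteq> j)"

definition c_orth_rep :: "nat \<Rightarrow> (nat \<Rightarrow> nat \<Rightarrow> bool) \<Rightarrow> nat \<Rightarrow>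
    (nat \<Rightarrow> complex) \<Rightarrow> (nat \<Rightarrow> nat \<Rightarrow> complex) \<Rightarrow> bool" where
  "c_orth_rep n E m psi v \<longleftrightarrow>
     psi \<in> cvecs m \<and> cinner m psi psi = 1 \<and>
     (\<forall>j<n. v j \<in> cvecs m \<and> cinner m (v j) (v j) = 1) \<and>
     (\<forall>i<n. \<forall>j<n. E i j \<longrightarrow> cinner m (v i) (v j) = 0)"

definition r_orth_rep :: "nat \<Rightarrow> (nat \<Rightarrow> nat \<Rightarrow> bool) \<Rightarrow> nat \<Rightarrow>
    (nat \<Rightarrow> real) \<Rightarrow> (nat \<Rightarrow> nat \<Rightarrow> real) \<Rightarrow> bool" where
  "r_orth_rep n E m phi u \<longleftrightarrow>
     phi \<in> rvecs m \<and> rinner m phi phi = 1 \<and>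
     (\<forall>j<n. u j \<in> rvecs m \<and> rinner m (u j) (u j) = 1) \<and>
     (\<forall>i<n. \<forall>j<n. E i j \<longrightarrow> rinner m (u i) (u j) = 0)"

definition theta_c :: "nat \<Rightarrow> (nat \<Rightarrow> nat \<Rightarrow> bool) \<Rightarrow> (nat \<Rightarrow> real) \<Rightarrow> real" where
  "theta_c n E w = Sup {(\<Sum>j<n. w j * (cmod (cinner m psi (v j)))\<^sup>2) | m psi v.
       m \<ge> 1 \<and> c_orth_rep n E m psi v}"

end

theory Submission
  imports Defs
begin

text \<open>Multiplying each v_j by a unimodular phase makes every overlap \<open>\<langle>\<psi>|v\<^sub>j\<rangle>\<close> real and
  nonnegative without changing the representation or the value. Splitting coordinates into real
  and imaginary parts then gives a real representation in \<open>\<real>\<^sup>2\<^sup>d\<close> with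
  \<open>\<langle>x|y\<rangle>\<^sub>\<real> = Re \<langle>x|y\<rangle>\<close>. In it all vectors are orthogonal to the realification J of \<open>i\<psi>\<close>,
  because \<open>\<langle>\<psi>|i\<psi>\<rangle> = i\<close> and \<open>\<langle>v\<^sub>j|i\<psi>\<rangle> = i \<bar>\<langle>\<psi>|v\<^sub>j\<rangle>\<bar>\<close> are purely imaginary; the Householder
  reflection exchanging J with the last basis vector therefore moves everything into \<open>\<real>\<^sup>2\<^sup>d\<^sup>-\<^sup>1\<close>
  while preserving all inner products.\<close>

lemma rinner_commute: "rinner m a b = rinner m b a"
  by (simp add: rinner_def mult.commute)

lemma rinner_diff_left: "rinner m (\<lambda>k. x k - y k) z = rinner m x z - rinner m y z"
  by (simp add: rinner_def sum_subtractf left_diff_distrib)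

lemma rinner_diff_right: "rinner m z (\<lambda>k. x k - y k) = rinner m z x - rinner m z y"
  by (simp add: rinner_def sum_subtractf right_diff_distrib)

lemma rinner_scaleR_left: "rinner m (\<lambda>k. c * x k) z = c * rinner m x z"
  by (simp add: rinner_def sum_distrib_left algebra_simps)

lemma rinner_scaleR_right: "rinner m z (\<lambda>k. c * x k) = c * rinner m z x"
  by (simp add: rinner_def sum_distrib_left algebra_simps)

lemma rinner_self_eq_0_imp:
  assumes "rinner m a a = 0" and "k < m"
  shows "a k = 0"
proof -
  have "\<forall>i\<in>{..<m}. a i * a i = 0"
    using assms(1) by (subst (asm) rinner_def, subst (asm) sum_nonneg_eq_0_iff) auto
  then show ?thesis using assms(2) by simp
qed

lemma rinner_unit_vector:
  "N < m \<Longrightarrow> rinner m y (\<lambda>k. if k = N then 1 else 0) = y N"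
  by (simp add: rinner_def if_distrib[where f="\<lambda>t. y _ * t"] cong: if_cong)

lemma rinner_Suc_rvecs: "x \<in> rvecs N \<Longrightarrow> rinner (Suc N) x y = rinner N x y"
  by (simp add: rinner_def rvecs_def)

definition householder :: "nat \<Rightarrow> (nat \<Rightarrow> real) \<Rightarrow> (nat \<Rightarrow> real) \<Rightarrow> nat \<Rightarrow> real" where
  "householder m a x = (\<lambda>k. x k - (2 * rinner m a x / rinner m a a) * a k)"

text \<open>For \<open>a = 0\<close> the division by zero makes the map the identity, so no hypothesis on a is needed.\<close>

lemma rinner_householder:
  "rinner m (householder m a x) (householder m a y) = rinner m x y"
proof -
  define s where "s = rinner m a a"
  have "rinner m (householder m a x) (householder m a y) =
      rinner m x y - (2 * rinner m a y / s) * rinner m a x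
        - (2 * rinner m a x / s) * rinner m a y
        + (2 * rinner m a x / s) * (2 * rinner m a y / s) * s"
    unfolding householder_def rinner_diff_left rinner_diff_right
      rinner_scaleR_left rinner_scaleR_right s_def
    by (simp add: rinner_commute[of m x a] algebra_simps)
  also have "\<dots> = rinner m x y"
    by (cases "s = 0") (simp_all add: field_simps)
  finally show ?thesis .
qed

lemma householder_rvecs:
  "x \<in> rvecs m \<Longrightarrow> a \<in> rvecs m \<Longrightarrow> householder m a x \<in> rvecs m"
  by (simp add: householder_def rvecs_def)

lemma householder_swap:
  assumes "rinner m x x = rinner m y y" and "k < m"
  shows "householder m (\<lambda>i. x i - y i) x k = y k"
proof -
  define a where "a = (\<lambda>i. x i - y i)"
  have aa: "rinner m a a = 2 * rinner m a x"
    using assms(1) unfolding a_def rinner_diff_left rinner_diff_right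
    by (simp add: rinner_commute[of m x y])
  show ?thesis
  proof (cases "rinner m a a = 0")
    case True
    then show ?thesis using rinner_self_eq_0_imp[OF True assms(2)]
      by (simp add: householder_def a_def)
  next
    case False
    then show ?thesis using aa by (simp add: householder_def a_def)
  qed
qed

lemma r_orth_rep_drop_dimension:
  assumes rep: "r_orth_rep n E (Suc N) phi u"
    and J: "J \<in> rvecs (Suc N)" "rinner (Suc N) J J = 1"
    and phi_J: "rinner (Suc N) phi J = 0"
    and u_J: "\<And>j. j < n \<Longrightarrow> rinner (Suc N) (u j) J = 0"
  shows "\<exists>phi' u'. r_orth_rep n E N phi' u' \<and>
           (\<forall>j<n. rinner N phi' (u' j) = rinner (Suc N) phi (u j))"
proof -
  define m where "m = Suc N"
  define e where "e = (\<lambda>k. if k = N then 1 else 0 :: real)"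
  define H where "H = householder m (\<lambda>k. J k - e k)"
  have H_inner: "rinner m (H x) (H y) = rinner m x y" for x y
    unfolding H_def by (rule rinner_householder)
  have e: "e \<in> rvecs m" "rinner m e e = 1"
    using rinner_unit_vector[of N m e] by (auto simp: e_def m_def rvecs_def)
  have HJ: "rinner m x (H J) = rinner m x e" for x
    unfolding H_def rinner_def
    using householder_swap[of m J e] J(2) e(2) by (simp add: m_def)
  have H_drop: "H x \<in> rvecs N" if x: "x \<in> rvecs m" "rinner m x J = 0" for x
  proof -
    have "H x N = rinner m (H x) e"
      using rinner_unit_vector[of N m "H x"] by (simp add: e_def m_def)
    also have "\<dots> = 0" using HJ[of "H x"] H_inner x(2) by simp
    finally have "H x N = 0" .
    moreover have "H x \<in> rvecs m"
      unfolding H_def using x(1) J(1) e(1)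
      by (intro householder_rvecs) (auto simp: rvecs_def m_def)
    ultimately show ?thesis
      unfolding rvecs_def m_def using le_neq_implies_less Suc_leI by blast
  qed
  have rep_parts: "phi \<in> rvecs m" "rinner m phi phi = 1"
    "\<And>j. j < n \<Longrightarrow> u j \<in> rvecs m \<and> rinner m (u j) (u j) = 1"
    "\<And>i j. i < n \<Longrightarrow> j < n \<Longrightarrow> E i j \<Longrightarrow> rinner m (u i) (u j) = 0"
    using rep unfolding r_orth_rep_def m_def by auto
  have phi': "H phi \<in> rvecs N" using H_drop rep_parts(1) phi_J by (simp add: m_def)
  have u': "H (u j) \<in> rvecs N" if "j < n" for j
    using H_drop rep_parts(3) u_J that by (simp add: m_def)
  have inner': "rinner N (H x) (H y) = rinner m x y" if "H x \<in> rvecs N" for x y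
    using rinner_Suc_rvecs[OF that, of "H y"] H_inner[of x y] unfolding m_def by simp
  have "r_orth_rep n E N (H phi) (\<lambda>j. H (u j))"
    unfolding r_orth_rep_def
    using phi' u' inner' rep_parts by auto
  moreover have "\<forall>j<n. rinner N (H phi) (H (u j)) = rinner (Suc N) phi (u j)"
    using inner'[OF phi'] by (simp add: m_def)
  ultimately show ?thesis by blast
qed

definition realify :: "nat \<Rightarrow> (nat \<Rightarrow> complex) \<Rightarrow> nat \<Rightarrow> real" where
  "realify d v k =
     (if k < 2 * d then (if even k then Re (v (k div 2)) else Im (v (k div 2))) else 0)"

lemma sum_lessThan_double:
  fixes f :: "nat \<Rightarrow> 'a::comm_monoid_add"
  shows "(\<Sum>k<2 * d. f k) = (\<Sum>k<d. f (2 * k) + f (2 * k + 1))"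
  by (induction d) (simp_all add: add.assoc)

lemma realify_rvecs: "realify d x \<in> rvecs (2 * d)"
  by (simp add: realify_def rvecs_def)

lemma rinner_realify: "rinner (2 * d) (realify d a) (realify d b) = Re (cinner d a b)"
proof -
  have "rinner (2 * d) (realify d a) (realify d b) =
      (\<Sum>k<d. realify d a (2 * k) * realify d b (2 * k)
               + realify d a (2 * k + 1) * realify d b (2 * k + 1))"
    by (simp add: rinner_def sum_lessThan_double)
  also have "\<dots> = (\<Sum>k<d. Re (cnj (a k) * b k))"
    by (rule sum.cong) (auto simp: realify_def)
  also have "\<dots> = Re (cinner d a b)" by (simp add: cinner_def)
  finally show ?thesis .
qed

lemma r_orth_rep_realify:
  assumes "c_orth_rep n E d psi v"
  shows "r_orth_rep n E (2 * d) (realify d psi) (\<lambda>j. realify d (v j))"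
  using assms unfolding r_orth_rep_def c_orth_rep_def
  by (simp add: realify_rvecs rinner_realify)

lemma cinner_scale_left: "cinner m (\<lambda>k. c * x k) z = cnj c * cinner m x z"
  by (simp add: cinner_def sum_distrib_left algebra_simps)

lemma cinner_scale_right: "cinner m z (\<lambda>k. c * x k) = c * cinner m z x"
  by (simp add: cinner_def sum_distrib_left algebra_simps)

lemma cinner_commute: "cinner m b a = cnj (cinner m a b)"
  by (simp add: cinner_def mult.commute)

definition phase :: "complex \<Rightarrow> complex" where
  "phase z = (if z = 0 then 1 else cnj z / complex_of_real (cmod z))"

lemma cnj_phase_mult_phase: "cnj (phase z) * phase z = 1"
proof (cases "z = 0")
  case False
  then have "cnj (phase z) * phase z = (z * cnj z) / complex_of_real ((cmod z)\<^sup>2)"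
    by (simp add: phase_def power2_eq_square)
  then show ?thesis using False by (simp add: complex_norm_square[symmetric])
qed (simp add: phase_def)

lemma phase_mult_self: "phase z * z = complex_of_real (cmod z)"
proof (cases "z = 0")
  case False
  then have "phase z * z = (z * cnj z) / complex_of_real (cmod z)"
    by (simp add: phase_def mult.commute)
  then show ?thesis using False
    by (simp add: complex_norm_square[symmetric] power2_eq_square)
qed (simp add: phase_def)

lemma c_orth_rep_scale:
  assumes "c_orth_rep n E m psi v" and "\<And>j. cnj (c j) * c j = 1"
  shows "c_orth_rep n E m psi (\<lambda>j k. c j * v j k)"
  using assms unfolding c_orth_rep_def
  by (simp add: cvecs_def cinner_scale_left cinner_scale_right mult.assoc[symmetric])

lemma c_orth_rep_realize:
  assumes "d \<ge> 1" and rep: "c_orth_rep n E d psi v"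
  shows "\<exists>phi u. r_orth_rep n E (2 * d - 1) phi u \<and>
           (\<forall>j<n. rinner (2 * d - 1) phi (u j) = cmod (cinner d psi (v j)))"
proof -
  define N where "N = 2 * d - 1"
  have N: "2 * d = Suc N" using assms(1) by (simp add: N_def)
  define v' where "v' j = (\<lambda>k. phase (cinner d psi (v j)) * v j k)" for j
  have overlap: "cinner d psi (v' j) = complex_of_real (cmod (cinner d psi (v j)))" for j
    by (simp add: v'_def cinner_scale_right phase_mult_self)
  have rep': "c_orth_rep n E d psi v'"
    unfolding v'_def by (rule c_orth_rep_scale[OF rep cnj_phase_mult_phase])
  define J where "J = realify d (\<lambda>k. \<i> * psi k)"
  have psi_unit: "cinner d psi psi = 1" using rep by (simp add: c_orth_rep_def)
  have "rinner (Suc N) J J = 1"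
    using psi_unit rinner_realify[of d]
    by (simp add: J_def N[symmetric] cinner_scale_left cinner_scale_right)
  moreover have "rinner (Suc N) (realify d psi) J = 0"
    using psi_unit rinner_realify[of d] by (simp add: J_def N[symmetric] cinner_scale_right)
  moreover have "rinner (Suc N) (realify d (v' j)) J = 0" for j
    using rinner_realify[of d] overlap[of j] cinner_commute[of d "v' j" psi]
    by (simp add: J_def N[symmetric] cinner_scale_right)
  ultimately obtain phi u where "r_orth_rep n E N phi u"
    and "\<forall>j<n. rinner N phi (u j) = rinner (Suc N) (realify d psi) (realify d (v' j))"
    using r_orth_rep_drop_dimension[of n E N "realify d psi" "\<lambda>j. realify d (v' j)" J]
      r_orth_rep_realify[OF rep'] realify_rvecs[of d] by (auto simp: J_def N)
  moreover have "rinner (Suc N) (realify d psi) (realify d (v' j)) = cmod (cinner d psi (v j))" for j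
    using rinner_realify[of d psi "v' j"] overlap[of j] by (simp add: N[symmetric])
  ultimately have "r_orth_rep n E N phi u \<and> (\<forall>j<n. rinner N phi (u j) = cmod (cinner d psi (v j)))"
    by simp
  then show ?thesis unfolding N_def by blast
qed

theorem mainTheorem2:
  fixes n d :: nat and E :: "nat \<Rightarrow> nat \<Rightarrow> bool" and w :: "nat \<Rightarrow> real"
    and psi :: "nat \<Rightarrow> complex" and v :: "nat \<Rightarrow> nat \<Rightarrow> complex"
  assumes "simple_graph n E"
    and "d \<ge> 1"
    and "c_orth_rep n E d psi v"
    and "(\<Sum>j<n. w j * (cmod (cinner d psi (v j)))\<^sup>2) = theta_c n E w"
  shows "\<exists>phi u. r_orth_rep n E (2 * d - 1) phi u \<and>
    (\<Sum>j<n. w j * (rinner (2 * d - 1) phi (u j))\<^sup>2) = (\<Sum>j<n. w j * (cmod (cinner d psi (v j)))\<^sup>2) \<and>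
    (\<Sum>j<n. w j * (cmod (cinner d psi (v j)))\<^sup>2) = theta_c n E w"
proof -
  obtain phi u where rep: "r_orth_rep n E (2 * d - 1) phi u"
    and overlaps: "\<forall>j<n. rinner (2 * d - 1) phi (u j) = cmod (cinner d psi (v j))"
    using c_orth_rep_realize[OF assms(2,3)] by blast
  have "(\<Sum>j<n. w j * (rinner (2 * d - 1) phi (u j))\<^sup>2)
        = (\<Sum>j<n. w j * (cmod (cinner d psi (v j)))\<^sup>2)"
    using overlaps by (intro sum.cong) simp_all
  with rep assms(4) show ?thesis by blast
qed

end
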